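(* Let $S\subseteq\mathbb{N}_0$ be a free numerical semigroup. Then $S=\langle G'\rangle$ for some sequence $G'$ that is both telescopic and minimal.
   Context: For a finite sequence $G=(g_1,\dots,g_k)\in\mathbb{N}_0^k$, $\langle G\rangle$ is the set of $\mathbb{N}_0$-linear combinations of its entries; $G$ is minimal if no proper subsequence generates the same set. With $G_i=(g_1,\dots,g_i)$, $d_i=\gcd(G_i)$, and (for $g_1+g_2>0$, or $g_1>0$ if $k=1$) $c_j=d_{j-1}/d_j$ for $2\le j\le k$, $G$ is telescopic if $c_jg_j\in\langle G_{j-1}\rangle$ for all $2\le j\le k$. A numerical semigroup is a submonoid of $\mathbb{N}_0$ with finite complement; it is free if it equals $\langle G\rangle$ for some telescopic sequence $G$ with $\gcd(G)=1$ (not necessarily minimal). *)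

theory Defs
  imports Main "HOL-Library.Sublist"
begin

definition gen :: "nat list \<Rightarrow> nat set" where
  "gen G = {\<Sum>i<length G. a i * G ! i | a :: nat \<Rightarrow> nat. True}"

definition minimal_seq :: "nat list \<Rightarrow> bool" where
  "minimal_seq G \<longleftrightarrow> (\<forall>H. strict_subseq H G \<longrightarrow> gen H \<noteq> gen G)"

definition dseq :: "nat list \<Rightarrow> nat \<Rightarrow> nat" where
  "dseq G i = Gcd (set (take i G))"

definition cseq :: "nat list \<Rightarrow> nat \<Rightarrow> nat" where
  "cseq G j = dseq G (j - 1) div dseq G j"

(* telescopic (1-based index j, entry g_j = G ! (j-1)); includes the standing
   nondegeneracy assumption g_1 + g_2 > 0 (resp. g_1 > 0 if k = 1) *)
definition telescopic :: "nat list \<Rightarrow> bool" where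
  "telescopic G \<longleftrightarrow>
     G \<noteq> [] \<and>
     (length G = 1 \<longrightarrow> G ! 0 > 0) \<and>
     (length G \<ge> 2 \<longrightarrow> G ! 0 + G ! 1 > 0) \<and>
     (\<forall>j. 2 \<le> j \<and> j \<le> length G \<longrightarrow> cseq G j * G ! (j - 1) \<in> gen (take (j - 1) G))"

definition numerical_semigroup :: "nat set \<Rightarrow> bool" where
  "numerical_semigroup S \<longleftrightarrow> 0 \<in> S \<and> (\<forall>x\<in>S. \<forall>y\<in>S. x + y \<in> S) \<and> finite (UNIV - S)"

definition free_ns :: "nat set \<Rightarrow> bool" where
  "free_ns S \<longleftrightarrow> numerical_semigroup S \<and>
     (\<exists>G. telescopic G \<and> Gcd (set G) = 1 \<and> S = gen G)"

end

theory Submission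
  imports Defs
begin

text \<open>
  Induction on the length of a telescopic sequence \<open>G = B @ [g]\<close> with \<open>gcd G = 1\<close>.
  Put \<open>d = gcd B\<close>; telescopy gives \<open>d g \<in> \<langle>B\<rangle>\<close>. If \<open>d = 1\<close>, the last entry is redundant and
  is dropped. Otherwise \<open>\<langle>G\<rangle>\<close> is the gluing \<open>d\<langle>H\<rangle> + \<langle>g\<rangle>\<close> of the semigroup of \<open>H = B/d\<close>
  with \<open>g \<in> \<langle>H\<rangle>\<close> and \<open>gcd(g, d) = 1\<close>; by induction \<open>\<langle>H\<rangle>\<close> has a telescopic minimal
  generating sequence \<open>H'\<close>, and \<open>d H'\<close> followed by \<open>g\<close> is again telescopic and minimal,
  except that when \<open>g\<close> already occurs in \<open>H'\<close> the redundant \<open>d g\<close> is replaced by \<open>g\<close> itself.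
\<close>

inductive_set gen_set :: "nat set \<Rightarrow> nat set" for A where
  zero: "0 \<in> gen_set A"
| add: "x \<in> A \<Longrightarrow> y \<in> gen_set A \<Longrightarrow> x + y \<in> gen_set A"

lemma gen_set_base: "x \<in> A \<Longrightarrow> x \<in> gen_set A"
  using gen_set.add[OF _ gen_set.zero, of x A] by simp

lemma gen_set_plus: "x \<in> gen_set A \<Longrightarrow> y \<in> gen_set A \<Longrightarrow> x + y \<in> gen_set A"
  by (induction x rule: gen_set.induct) (auto simp: add.assoc intro: gen_set.add)

lemma gen_set_mult: "x \<in> gen_set A \<Longrightarrow> k * x \<in> gen_set A"
  by (induction k) (auto intro: gen_set.zero gen_set_plus)

lemma gen_set_least: "A \<subseteq> gen_set B \<Longrightarrow> gen_set A \<subseteq> gen_set B"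
proof
  fix x assume AB: "A \<subseteq> gen_set B" and x: "x \<in> gen_set A"
  from x show "x \<in> gen_set B"
    by (induction x rule: gen_set.induct) (use AB in \<open>auto intro: gen_set.zero gen_set_plus\<close>)
qed

lemma gen_set_mono: "A \<subseteq> B \<Longrightarrow> gen_set A \<subseteq> gen_set B"
  by (rule gen_set_least) (auto intro: gen_set_base)

lemma gen_set_insert_absorb: "x \<in> gen_set A \<Longrightarrow> gen_set (insert x A) = gen_set A"
  by (intro equalityI gen_set_least gen_set_mono) (auto intro: gen_set_base)

lemma gen_set_empty: "gen_set {} = {0}"
proof
  show "gen_set {} \<subseteq> {0}"
  proof
    fix x assume "x \<in> gen_set {}" then show "x \<in> {0}"
      by (induction rule: gen_set.induct) auto
  qed
qed (auto intro: gen_set.zero)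

lemma gen_set_one: "1 \<in> A \<Longrightarrow> gen_set A = UNIV"
  using gen_set_mult[OF gen_set_base, of 1 A] by auto

lemma gen_set_insert: "gen_set (insert g A) = {m * g + t | m t. t \<in> gen_set A}"
proof
  show "gen_set (insert g A) \<subseteq> {m * g + t | m t. t \<in> gen_set A}"
  proof
    fix x assume "x \<in> gen_set (insert g A)"
    then show "x \<in> {m * g + t | m t. t \<in> gen_set A}"
    proof (induction x rule: gen_set.induct)
      case zero then show ?case by (auto intro!: exI[of _ 0] gen_set.zero)
    next
      case (add x y)
      then obtain m t where y: "y = m * g + t" "t \<in> gen_set A" by auto
      show ?case
      proof (cases "x = g")
        case True
        then show ?thesis using y by (intro CollectI exI[of _ "Suc m"] exI[of _ t]) auto
      next
        case False
        then have "x \<in> A" using add by auto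
        then show ?thesis
          using y by (intro CollectI exI[of _ m] exI[of _ "x + t"]) (auto intro: gen_set.add)
      qed
    qed
  qed
next
  have "gen_set A \<subseteq> gen_set (insert g A)" by (rule gen_set_mono) auto
  moreover have "g \<in> gen_set (insert g A)" by (rule gen_set_base) auto
  ultimately show "{m * g + t | m t. t \<in> gen_set A} \<subseteq> gen_set (insert g A)"
    by (auto intro!: gen_set_plus gen_set_mult)
qed

lemma gen_set_image_mult: "gen_set ((*) d ` A) = (*) d ` gen_set A"
proof
  show "gen_set ((*) d ` A) \<subseteq> (*) d ` gen_set A"
  proof
    fix x assume "x \<in> gen_set ((*) d ` A)" then show "x \<in> (*) d ` gen_set A"
    proof (induction x rule: gen_set.induct)
      case zero then show ?case using gen_set.zero by force
    next
      case (add x y)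
      then obtain a b where "x = d * a" "a \<in> A" "y = d * b" "b \<in> gen_set A" by auto
      then show ?case by (metis distrib_left image_eqI gen_set.add)
    qed
  qed
next
  show "(*) d ` gen_set A \<subseteq> gen_set ((*) d ` A)"
  proof
    fix x assume "x \<in> (*) d ` gen_set A"
    then obtain y where "y \<in> gen_set A" "x = d * y" by auto
    then show "x \<in> gen_set ((*) d ` A)"
    proof (induction y arbitrary: x rule: gen_set.induct)
      case zero then show ?case by (simp add: gen_set.zero)
    next
      case (add a b) then show ?case by (auto simp: distrib_left intro!: gen_set.add)
    qed
  qed
qed

lemma mult_mem_gen_set_image_mult_iff:
  "0 < (d::nat) \<Longrightarrow> d * y \<in> gen_set ((*) d ` A) \<longleftrightarrow> y \<in> gen_set A"
  by (auto simp: gen_set_image_mult)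

lemma gen_Cons: "gen (x # G) = {m * x + t | m t. t \<in> gen G}"
proof
  show "gen (x # G) \<subseteq> {m * x + t | m t. t \<in> gen G}"
  proof
    fix y assume "y \<in> gen (x # G)"
    then obtain a where y: "y = (\<Sum>i<length (x # G). a i * (x # G) ! i)" by (auto simp: gen_def)
    have "y = a 0 * x + (\<Sum>i<length G. a (Suc i) * G ! i)"
      unfolding y by (simp only: length_Cons sum.lessThan_Suc_shift) simp
    moreover have "(\<Sum>i<length G. a (Suc i) * G ! i) \<in> gen G"
      unfolding gen_def by (intro CollectI exI[of _ "\<lambda>i. a (Suc i)"]) simp
    ultimately show "y \<in> {m * x + t | m t. t \<in> gen G}" by blast
  qed
next
  show "{m * x + t | m t. t \<in> gen G} \<subseteq> gen (x # G)"
  proof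
    fix y assume "y \<in> {m * x + t | m t. t \<in> gen G}"
    then obtain m b where y: "y = m * x + (\<Sum>i<length G. b i * G ! i)" by (auto simp: gen_def)
    define a where "a = (\<lambda>i. case i of 0 \<Rightarrow> m | Suc j \<Rightarrow> b j)"
    have "y = (\<Sum>i<length (x # G). a i * (x # G) ! i)"
      unfolding y by (simp only: length_Cons sum.lessThan_Suc_shift) (simp add: a_def)
    then show "y \<in> gen (x # G)" by (auto simp: gen_def)
  qed
qed

lemma gen_eq_gen_set: "gen G = gen_set (set G)"
proof (induction G)
  case Nil then show ?case by (simp add: gen_def gen_set_empty)
next
  case (Cons x G) then show ?case by (simp add: gen_Cons gen_set_insert)
qed

definition irredundant :: "nat set \<Rightarrow> bool" where
  "irredundant A \<longleftrightarrow> (\<forall>x\<in>A. x \<notin> gen_set (A - {x}))"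

lemma irredundant_zero_notin: "irredundant A \<Longrightarrow> 0 \<notin> A"
  unfolding irredundant_def using gen_set.zero by blast

lemma minimal_seq_imp_distinct: "minimal_seq L \<Longrightarrow> distinct L"
proof (rule ccontr)
  assume min: "minimal_seq L" and "\<not> distinct L"
  then obtain xs ys zs y where L: "L = xs @ [y] @ ys @ [y] @ zs"
    using not_distinct_decomp by blast
  let ?H = "xs @ [y] @ ys @ zs"
  have "subseq (ys @ zs) (ys @ [y] @ zs)"
    by (simp only: subseq_append') (rule list_emb_append2, rule subseq_order.refl)
  then have "subseq ?H L" unfolding L by (simp only: subseq_append')
  moreover have "?H \<noteq> L" unfolding L by simp
  ultimately have "gen ?H \<noteq> gen L" using min unfolding minimal_seq_def strict_subseq_def by blast
  moreover have "set ?H = set L" unfolding L by auto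
  ultimately show False unfolding gen_eq_gen_set by simp
qed

lemma minimal_seq_imp_irredundant: "minimal_seq L \<Longrightarrow> irredundant (set L)"
  unfolding irredundant_def
proof
  fix x assume min: "minimal_seq L" and x: "x \<in> set L"
  show "x \<notin> gen_set (set L - {x})"
  proof
    assume red: "x \<in> gen_set (set L - {x})"
    let ?H = "filter (\<lambda>y. y \<noteq> x) L"
    have "x \<notin> set ?H" by simp
    then have "?H \<noteq> L" using x by metis
    then have "gen ?H \<noteq> gen L"
      using min subseq_filter_left unfolding minimal_seq_def strict_subseq_def by blast
    moreover have "set ?H = set L - {x}" by auto
    ultimately show False
      using gen_set_insert_absorb[OF red] x unfolding gen_eq_gen_set by (simp add: insert_absorb)
  qed
qed

lemma distinct_irredundant_imp_minimal_seq:
  assumes "distinct L" and irr: "irredundant (set L)"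
  shows "minimal_seq L"
  unfolding minimal_seq_def
proof (intro allI impI)
  fix H assume "strict_subseq H L"
  then have sub: "subseq H L" and "H \<noteq> L" unfolding strict_subseq_def by auto
  have HL: "set H \<subseteq> set L" using list_emb_set[OF sub] by blast
  have "set H \<noteq> set L"
  proof
    assume "set H = set L"
    then have "length L \<le> length H"
      using \<open>distinct L\<close> card_length[of H] by (simp add: distinct_card)
    then show False using subseq_same_length[OF sub] list_emb_length[OF sub] \<open>H \<noteq> L\<close> by simp
  qed
  then obtain x where x: "x \<in> set L" "x \<notin> set H" using HL by blast
  have "gen_set (set H) \<subseteq> gen_set (set L - {x})" by (rule gen_set_mono) (use HL x in auto)
  moreover have "x \<notin> gen_set (set L - {x})" using irr x unfolding irredundant_def by auto
  moreover have "x \<in> gen_set (set L)" using x by (auto intro: gen_set_base)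
  ultimately show "gen H \<noteq> gen L" unfolding gen_eq_gen_set by blast
qed

lemma minimal_seq_iff: "minimal_seq L \<longleftrightarrow> distinct L \<and> irredundant (set L)"
  using minimal_seq_imp_distinct minimal_seq_imp_irredundant distinct_irredundant_imp_minimal_seq
  by blast

definition telescopic_steps :: "nat list \<Rightarrow> bool" where
  "telescopic_steps G \<longleftrightarrow>
     (\<forall>j. 2 \<le> j \<and> j \<le> length G \<longrightarrow> cseq G j * G ! (j - 1) \<in> gen (take (j - 1) G))"

lemma telescopic_imp_steps: "telescopic G \<Longrightarrow> G \<noteq> [] \<and> telescopic_steps G"
  unfolding telescopic_def telescopic_steps_def by blast

lemma minimal_telescopic_steps_imp_telescopic:
  assumes "G \<noteq> []" "telescopic_steps G" "minimal_seq G"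
  shows "telescopic G"
proof -
  have "G ! 0 \<in> set G" using assms(1) by simp
  then have "0 < G ! 0"
    using irredundant_zero_notin assms(3) unfolding minimal_seq_iff by (metis gr0I)
  then show ?thesis using assms(1,2) unfolding telescopic_def telescopic_steps_def by auto
qed

lemma cseq_append:
  assumes "1 \<le> j" "j \<le> length B"
  shows "cseq (B @ C) j = cseq B j"
  using assms unfolding cseq_def dseq_def by simp

lemma telescopic_steps_appendD: "telescopic_steps (B @ C) \<Longrightarrow> telescopic_steps B"
  unfolding telescopic_steps_def
  by (auto simp: cseq_append nth_append_left dest: spec)

lemma telescopic_steps_snoc:
  assumes steps: "telescopic_steps L" and x: "x \<in> gen L"
  shows "telescopic_steps (L @ [x])"
  unfolding telescopic_steps_def
proof (intro allI impI)
  fix j assume j: "2 \<le> j \<and> j \<le> length (L @ [x])"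
  show "cseq (L @ [x]) j * (L @ [x]) ! (j - 1) \<in> gen (take (j - 1) (L @ [x]))"
  proof (cases "j \<le> length L")
    case True
    then show ?thesis
      using steps j unfolding telescopic_steps_def
      by (simp add: cseq_append nth_append_left)
  next
    case False
    then have "j - 1 = length L" using j by auto
    then show ?thesis using x gen_set_mult unfolding gen_eq_gen_set by simp
  qed
qed

lemma dseq_map_mult: "dseq (map ((*) d) H) i = d * dseq H i"
  unfolding dseq_def take_map set_map by (simp add: Gcd_mult)

lemma telescopic_steps_map_multD:
  assumes d: "0 < d" and steps: "telescopic_steps (map ((*) d) H)"
  shows "telescopic_steps H"
  unfolding telescopic_steps_def
proof (intro allI impI)
  fix j assume j: "2 \<le> j \<and> j \<le> length H"
  have "cseq (map ((*) d) H) j = cseq H j" unfolding cseq_def dseq_map_mult using d by simp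
  then have "d * (cseq H j * H ! (j - 1)) \<in> gen_set ((*) d ` set (take (j - 1) H))"
    using steps j unfolding telescopic_steps_def gen_eq_gen_set
    by (auto simp: take_map mult.left_commute)
  then show "cseq H j * H ! (j - 1) \<in> gen (take (j - 1) H)"
    unfolding gen_eq_gen_set mult_mem_gen_set_image_mult_iff[OF d] .
qed

lemma telescopic_steps_last:
  assumes "telescopic_steps (B @ [g])" "B \<noteq> []" "Gcd (insert g (set B)) = 1"
  shows "Gcd (set B) * g \<in> gen B"
proof -
  have "2 \<le> Suc (length B)" using assms(2) by (cases B) auto
  then have "cseq (B @ [g]) (Suc (length B)) * g \<in> gen B"
    using spec[OF assms(1)[unfolded telescopic_steps_def], of "Suc (length B)"] by simp
  moreover have "cseq (B @ [g]) (Suc (length B)) = Gcd (set B)"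
    using assms(3) unfolding cseq_def dseq_def by simp
  ultimately show ?thesis by simp
qed

text \<open>
  The gluing map: entries of the inner sequence are scaled by \<open>d\<close>, except \<open>g\<close> itself, which
  stands in for \<open>d g\<close> (redundant once \<open>g\<close> is present).
\<close>

definition glue :: "nat \<Rightarrow> nat \<Rightarrow> nat \<Rightarrow> nat" where
  "glue d g x = (if x = g then x else d * x)"

lemma glue_self [simp]: "glue d g g = g"
  by (simp add: glue_def)

lemma glue_other [simp]: "x \<noteq> g \<Longrightarrow> glue d g x = d * x"
  by (simp add: glue_def)

lemma Gcd_image_glue:
  assumes "coprime g d"
  shows "Gcd (glue d g ` A) = (if g \<in> A then Gcd A else d * Gcd A)"
proof (cases "g \<in> A")
  case True
  have "glue d g ` A = insert g ((*) d ` (A - {g}))"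
    using True unfolding glue_def by auto
  then have "Gcd (glue d g ` A) = gcd g (d * Gcd (A - {g}))" by (simp add: Gcd_mult)
  also have "\<dots> = gcd g (Gcd (A - {g}))" using assms by (rule gcd_mult_right_left_cancel)
  also have "\<dots> = Gcd A" using True by (metis Gcd_insert insert_Diff)
  finally show ?thesis using True by simp
next
  case False
  then have "glue d g ` A = (*) d ` A" unfolding glue_def by auto
  then show ?thesis using False by (simp add: Gcd_mult)
qed

lemma dseq_map_glue:
  "coprime g d \<Longrightarrow> dseq (map (glue d g) L) i =
     (if g \<in> set (take i L) then dseq L i else d * dseq L i)"
  unfolding dseq_def take_map set_map by (rule Gcd_image_glue)

lemma mult_mem_gen_set_image_glue:
  assumes "y \<in> gen_set A"
  shows "d * y \<in> gen_set (glue d g ` A)"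
proof -
  have "(*) d ` A \<subseteq> gen_set (glue d g ` A)"
  proof
    fix z assume "z \<in> (*) d ` A"
    then obtain x where x: "x \<in> A" "z = d * x" by auto
    have "glue d g x \<in> gen_set (glue d g ` A)" using x by (intro gen_set_base) simp
    then have "d * glue d g x \<in> gen_set (glue d g ` A)" by (rule gen_set_mult)
    with \<open>glue d g x \<in> gen_set (glue d g ` A)\<close> show "z \<in> gen_set (glue d g ` A)"
      using x(2) by (cases "x = g") simp_all
  qed
  then have "gen_set ((*) d ` A) \<subseteq> gen_set (glue d g ` A)" by (rule gen_set_least)
  moreover have "d * y \<in> gen_set ((*) d ` A)" unfolding gen_set_image_mult using assms by (rule imageI)
  ultimately show ?thesis by blast
qed

lemma telescopic_steps_map_glue:
  assumes steps: "telescopic_steps L" and d: "0 < d" and cop: "coprime g d"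
  shows "telescopic_steps (map (glue d g) L)"
  unfolding telescopic_steps_def
proof (intro allI impI)
  fix j assume j: "2 \<le> j \<and> j \<le> length (map (glue d g) L)"
  define P where "P = take (j - 1) L"
  define h where "h = L ! (j - 1)"
  have jL: "j - 1 < length L" using j by auto
  have take_j: "take j L = P @ [h]"
    using take_Suc_conv_app_nth[OF jL] j unfolding P_def h_def by (simp add: Suc_diff_le)
  have step: "cseq L j * h \<in> gen_set (set P)"
    using steps j unfolding telescopic_steps_def P_def h_def gen_eq_gen_set by auto
  have dvd: "dseq L j dvd dseq L (j - 1)"
    unfolding dseq_def take_j P_def by (simp add: Gcd_insert)
  let ?c = "cseq (map (glue d g) L) j"
  have "?c * glue d g h \<in> gen_set (glue d g ` set P)"
  proof (cases "g \<in> set P \<and> h = g")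
    case True
    then have "g \<in> gen_set (glue d g ` set P)" by (intro gen_set_base) (force simp: glue_def)
    then show ?thesis using True gen_set_mult by (simp add: glue_def)
  next
    case False
    \<comment> \<open>the factor \<open>d\<close> introduced by \<open>glue\<close> cancels in \<open>c\<^sub>j\<close> unless \<open>h = g\<close> enters at step \<open>j\<close>\<close>
    have "?c * glue d g h = d * (cseq L j * h)"
      using False d dvd unfolding cseq_def dseq_map_glue[OF cop] take_j
      by (auto simp: glue_def P_def div_mult_swap)
    then show ?thesis using mult_mem_gen_set_image_glue[OF step] by simp
  qed
  then show "?c * map (glue d g) L ! (j - 1) \<in> gen (take (j - 1) (map (glue d g) L))"
    unfolding gen_eq_gen_set using jL by (simp add: P_def h_def take_map)
qed

lemma gen_set_image_glue_insert:
  assumes "0 < d"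
  shows "gen_set (glue d g ` insert g A) = gen_set (insert g ((*) d ` A))"
proof (intro equalityI gen_set_least subsetI)
  fix z assume "z \<in> glue d g ` insert g A"
  moreover have "(*) d ` gen_set A \<subseteq> gen_set (insert g ((*) d ` A))"
    using gen_set_mono[of "(*) d ` A"] by (auto simp: gen_set_image_mult)
  ultimately show "z \<in> gen_set (insert g ((*) d ` A))"
    unfolding glue_def by (auto intro: gen_set_base)
next
  fix z assume "z \<in> insert g ((*) d ` A)"
  moreover have "y \<in> A \<Longrightarrow> d * y \<in> gen_set (glue d g ` insert g A)" for y
    by (rule mult_mem_gen_set_image_glue) (auto intro: gen_set_base)
  ultimately show "z \<in> gen_set (glue d g ` insert g A)"
    by (auto intro: gen_set_base simp: glue_def)
qed

lemma gen_set_insert_image_mult_cong: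
  "gen_set A = gen_set B \<Longrightarrow> gen_set (insert g ((*) d ` A)) = gen_set (insert g ((*) d ` B))"
  by (simp add: gen_set_insert gen_set_image_mult)

lemma notin_gen_set_insert_remove:
  assumes irr: "irredundant A" and y: "y \<in> A" and g: "g \<in> gen_set A" "g \<noteq> y"
  shows "y \<notin> gen_set (insert g (A - {y}))"
proof
  assume "y \<in> gen_set (insert g (A - {y}))"
  then obtain m t where yeq: "y = m * g + t" and t: "t \<in> gen_set (A - {y})"
    by (auto simp: gen_set_insert)
  have "insert y (A - {y}) = A" using y by blast
  then have "g \<in> gen_set (insert y (A - {y}))" using g(1) by simp
  then obtain b r where geq: "g = b * y + r" and r: "r \<in> gen_set (A - {y})"
    unfolding gen_set_insert by blast
  have notin: "y \<notin> gen_set (A - {y})" using irr y unfolding irredundant_def by auto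
  then have "0 < y" using gen_set.zero by (metis gr0I)
  consider "m = 0" | "b = 0" | "1 \<le> m" "1 \<le> b" by linarith
  then show False
  proof cases
    case 1 then show False using yeq t notin by simp
  next
    case 2 then show False using yeq geq t r notin by (metis add_0 gen_set_mult gen_set_plus mult_0)
  next
    \<comment> \<open>\<open>y = m (b y + r) + t \<ge> m b y\<close> forces \<open>m = b = 1\<close> and \<open>r = 0\<close>, i.e. \<open>g = y\<close>\<close>
    case 3
    have "y = m * b * y + m * r + t" using yeq geq by (simp add: algebra_simps)
    moreover have "y \<le> m * b * y" using 3 by simp
    ultimately have "m * b * y = y" "m * r = 0" by linarith+
    then show False using 3 \<open>0 < y\<close> geq g(2) by simp
  qed
qed

lemma mem_gen_set_insert_image_multD:
  assumes cop: "coprime g d" and d: "0 < d" and y: "d * y \<in> gen_set (insert g ((*) d ` B))"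
  shows "y \<in> gen_set (insert g B)"
proof -
  obtain m t where eq: "d * y = m * g + d * t" and t: "t \<in> gen_set B"
    using y by (auto simp: gen_set_insert gen_set_image_mult)
  then have "d dvd m * g" by (metis dvd_add_left_iff dvd_triv_left)
  then obtain m' where "m = d * m'"
    using cop by (metis coprime_commute coprime_dvd_mult_left_iff dvd_def)
  then have "d * y = d * (m' * g + t)" using eq by (simp add: algebra_simps)
  then have "y = m' * g + t" using d by simp
  then show ?thesis using t by (auto simp: gen_set_insert)
qed

lemma irredundant_image_glue:
  assumes irr: "irredundant A" and gA: "g \<in> gen_set A" and cop: "coprime g d" and d: "2 \<le> d"
  shows "irredundant (glue d g ` insert g A)"
proof -
  have ndvd: "\<not> d dvd g"
  proof
    assume "d dvd g"
    then have "d dvd gcd g d" by simp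
    then show False using cop d by simp
  qed
  have neq: "d * z \<noteq> g" for z using ndvd by auto
  have img: "glue d g ` insert g A = insert g ((*) d ` (A - {g}))" unfolding glue_def by auto
  show ?thesis unfolding irredundant_def img
  proof
    fix x assume x: "x \<in> insert g ((*) d ` (A - {g}))"
    show "x \<notin> gen_set (insert g ((*) d ` (A - {g})) - {x})"
    proof (cases "x = g")
      case True
      then have "insert g ((*) d ` (A - {g})) - {x} = (*) d ` (A - {g})" using neq by auto
      then show ?thesis using True ndvd by (auto simp: gen_set_image_mult)
    next
      case False
      then obtain y where y: "y \<in> A" "y \<noteq> g" "x = d * y" using x by auto
      have eq: "insert g ((*) d ` (A - {g})) - {x} = insert g ((*) d ` (A - {g, y}))"
        using y neq d by auto
      have "y \<notin> gen_set (insert g (A - {g, y}))"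
        using notin_gen_set_insert_remove[OF irr y(1) gA y(2)[symmetric]]
          gen_set_mono[of "insert g (A - {g, y})" "insert g (A - {y})"] by blast
      then have "x \<notin> gen_set (insert g ((*) d ` (A - {g, y})))"
        using mem_gen_set_insert_image_multD[OF cop] d y(3) by (metis not_gr0 not_numeral_le_zero)
      then show ?thesis unfolding eq .
    qed
  qed
qed

lemma telescopic_minimal_glue:
  assumes tel: "telescopic H" and min: "minimal_seq H" and g: "g \<in> gen H"
    and cop: "coprime g d" and d: "2 \<le> d"
  shows "\<exists>G. telescopic G \<and> minimal_seq G \<and> gen G = gen_set (insert g ((*) d ` set H))"
proof -
  define L where "L = (if g \<in> set H then H else H @ [g])"
  define G where "G = map (glue d g) L"
  have L: "set L = insert g (set H)" "distinct L" "telescopic_steps L" "L \<noteq> []"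
    using telescopic_imp_steps[OF tel] minimal_seq_imp_distinct[OF min] g
    by (auto simp: L_def telescopic_steps_snoc)
  have "inj_on (glue d g) (set L)"
    using cop d by (intro inj_onI) (auto simp: glue_def split: if_splits)
  then have "minimal_seq G"
    using L irredundant_image_glue[OF minimal_seq_imp_irredundant[OF min] _ cop d] g
    unfolding G_def minimal_seq_iff gen_eq_gen_set by (simp add: distinct_map)
  moreover have "telescopic_steps G"
    unfolding G_def by (rule telescopic_steps_map_glue) (use L d cop in auto)
  then have "telescopic G"
    using L \<open>minimal_seq G\<close> unfolding G_def by (intro minimal_telescopic_steps_imp_telescopic) auto
  moreover have "gen G = gen_set (insert g ((*) d ` set H))"
    unfolding G_def gen_eq_gen_set set_map L(1) by (rule gen_set_image_glue_insert) (use d in simp)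
  ultimately show ?thesis by blast
qed

lemma telescopic_minimal_one: "telescopic [1] \<and> minimal_seq [1] \<and> gen [1] = UNIV"
  by (simp add: telescopic_def minimal_seq_iff irredundant_def gen_set_empty
      gen_eq_gen_set gen_set_one)

lemma telescopic_minimal_exists:
  assumes "G \<noteq> []" "telescopic_steps G" "Gcd (set G) = 1"
  shows "\<exists>G'. telescopic G' \<and> minimal_seq G' \<and> gen G' = gen G"
  using assms
proof (induction "length G" arbitrary: G rule: less_induct)
  case less
  show ?case
  proof (cases "length G = 1")
    case True
    then have "G = [1]" using less.prems(3) by (cases G) auto
    then show ?thesis using telescopic_minimal_one by blast
  next
    case False
    obtain B g where G: "G = B @ [g]" using less.prems(1) rev_exhaust by blast
    then have "B \<noteq> []" using False by auto
    have shorter: "length B < length G" using G by simp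
    define d where "d = Gcd (set B)"
    have setG: "set G = insert g (set B)" using G by simp
    have gd: "gcd g d = 1" using less.prems(3) setG unfolding d_def by (simp add: Gcd_insert)
    have dg: "d * g \<in> gen_set (set B)"
      unfolding d_def gen_eq_gen_set[symmetric]
      by (rule telescopic_steps_last) (use less.prems(2,3) \<open>B \<noteq> []\<close> G in simp_all)
    have stepsB: "telescopic_steps B" using less.prems(2) G telescopic_steps_appendD by blast
    consider "d = 0" | "d = 1" | "2 \<le> d" by linarith
    then show ?thesis
    proof cases
      case 1
      then have "gen G = UNIV" using gd setG by (simp add: gen_eq_gen_set gen_set_one)
      then show ?thesis using telescopic_minimal_one by metis
    next
      case 2
      then have "gen G = gen B"
        using dg setG unfolding gen_eq_gen_set by (simp add: gen_set_insert_absorb)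
      moreover have "Gcd (set B) = 1" using 2 unfolding d_def .
      ultimately show ?thesis using less.hyps[OF shorter \<open>B \<noteq> []\<close> stepsB] by simp
    next
      case 3
      define H where "H = map (\<lambda>x. x div d) B"
      have "map (\<lambda>x. d * (x div d)) B = B"
        by (rule map_idI) (simp add: d_def Gcd_dvd)
      then have BH: "B = map ((*) d) H" unfolding H_def by (simp add: comp_def)
      have "d = d * Gcd (set H)" using d_def BH by (simp add: Gcd_mult)
      then have "Gcd (set H) = 1" using 3 by simp
      moreover have "telescopic_steps H"
        using 3 stepsB BH by (rule_tac telescopic_steps_map_multD[of d]) simp_all
      moreover have "length H < length G" "H \<noteq> []" using shorter \<open>B \<noteq> []\<close> BH by auto
      ultimately obtain H' where H': "telescopic H'" "minimal_seq H'" "gen H' = gen H"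
        using less.hyps by blast
      have "d * g \<in> gen_set ((*) d ` set H)" using dg BH by simp
      then have "g \<in> gen H'"
        using 3 H'(3) mult_mem_gen_set_image_mult_iff[of d g "set H"]
        unfolding gen_eq_gen_set by simp
      moreover have "coprime g d" using gd by (simp add: coprime_iff_gcd_eq_1)
      ultimately obtain G' where "telescopic G'" "minimal_seq G'"
        "gen G' = gen_set (insert g ((*) d ` set H'))"
        using telescopic_minimal_glue[OF H'(1,2)] 3 by blast
      moreover have "gen_set (insert g ((*) d ` set H')) = gen_set (insert g ((*) d ` set H))"
        by (rule gen_set_insert_image_mult_cong) (use H'(3) in \<open>simp only: gen_eq_gen_set\<close>)
      moreover have "insert g ((*) d ` set H) = set G" using setG BH by simp
      ultimately show ?thesis unfolding gen_eq_gen_set by metis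
    qed
  qed
qed

theorem mainTheorem2:
  fixes S :: "nat set"
  assumes "free_ns S"
  shows "\<exists>G'. telescopic G' \<and> minimal_seq G' \<and> S = gen G'"
proof -
  obtain G where G: "telescopic G" "Gcd (set G) = 1" "S = gen G"
    using assms unfolding free_ns_def by blast
  then show ?thesis
    using telescopic_minimal_exists telescopic_imp_steps by metis
qed

end
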